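(* Let $K$ be a spherically complete valued field, $d\ge1$, and $C\subseteq K^d$ an $\mathcal{O}$-submodule. Then there exist a complete flag of $K$-linear subspaces $\{0\}\subsetneq F_1\subsetneq F_2\subsetneq\dots\subsetneq F_d=K^d$ (so $\dim F_i=i$) and nonempty upwards closed subsets $\Delta_1\supseteq\Delta_2\supseteq\dots\supseteq\Delta_d$ of $\Gamma\cup\{\infty\}$ such that $$C=\{v_1+\dots+v_d:\ v_i\in F_i,\ \nu_{K^d}(v_i)\in\Delta_i \text{ for all } i\}.$$
   Context: $K$ is a field with valuation $\nu:K\to\Gamma\cup\{\infty\}$ ($\Gamma$ an ordered abelian group, $\infty$ above all of $\Gamma$), valuation ring $\mathcal{O}=\{x:\nu(x)\ge0\}$. On $K^d$, $\nu_{K^d}(x_1,\dots,x_d)=\min_i\nu(x_i)$. A ball in $K$ is $\{x:\nu(x-c)\ge r\}$ or $\{x:\nu(x-c)>r\}$ ($c\in K$, $r\in\Gamma$); $K$ is spherically complete if every nested (totally ordered by inclusion) family of balls has nonempty intersection. A subset $\Delta\subseteq\Gamma\cup\{\infty\}$ is upwards closed if $\gamma\in\Delta$, $\delta\ge\gamma$ imply $\delta\in\Delta$. *)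

theory Defs
  imports "HOL-Analysis.Analysis"
begin

datatype 'g extv = Fin 'g | Infty

instantiation extv :: (linorder) linorder
begin
fun less_eq_extv :: "'a extv \<Rightarrow> 'a extv \<Rightarrow> bool" where
  "less_eq_extv _ Infty = True"
| "less_eq_extv Infty (Fin _) = False"
| "less_eq_extv (Fin a) (Fin b) = (a \<le> b)"
definition less_extv :: "'a extv \<Rightarrow> 'a extv \<Rightarrow> bool" where
  "less_extv x y = (x \<le> y \<and> \<not> y \<le> x)"
instance
proof
  fix x y z :: "'a extv"
  show "(x < y) = (x \<le> y \<and> \<not> y \<le> x)" by (simp add: less_extv_def)
  show "x \<le> x" by (cases x) auto
  show "x \<le> y \<Longrightarrow> y \<le> z \<Longrightarrow> x \<le> z" by (cases x; cases y; cases z) auto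
  show "x \<le> y \<Longrightarrow> y \<le> x \<Longrightarrow> x = y" by (cases x; cases y) auto
  show "x \<le> y \<or> y \<le> x" by (cases x; cases y) auto
qed
end

fun ext_add :: "'g::plus extv \<Rightarrow> 'g extv \<Rightarrow> 'g extv" where
  "ext_add (Fin a) (Fin b) = Fin (a + b)"
| "ext_add _ _ = Infty"

text \<open>A (Krull) valuation nu : K -> Gamma \<union> {infinity}, with value group Gamma
  (nu maps K^* onto Gamma).\<close>
definition valuation :: "('k::field \<Rightarrow> 'g::linordered_ab_group_add extv) \<Rightarrow> bool" where
  "valuation \<nu> \<longleftrightarrow>
     (\<forall>x. \<nu> x = Infty \<longleftrightarrow> x = 0) \<and>
     (\<forall>x y. \<nu> (x * y) = ext_add (\<nu> x) (\<nu> y)) \<and>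
     (\<forall>x y. min (\<nu> x) (\<nu> y) \<le> \<nu> (x + y)) \<and>
     (\<forall>\<gamma>. \<exists>x. \<nu> x = Fin \<gamma>)"

definition is_ball :: "('k::field \<Rightarrow> 'g::linorder extv) \<Rightarrow> 'k set \<Rightarrow> bool" where
  "is_ball \<nu> B \<longleftrightarrow> (\<exists>c r. B = {x. Fin r \<le> \<nu> (x - c)} \<or> B = {x. Fin r < \<nu> (x - c)})"

definition spherically_complete :: "('k::field \<Rightarrow> 'g::linorder extv) \<Rightarrow> bool" where
  "spherically_complete \<nu> \<longleftrightarrow>
     (\<forall>\<B>. (\<forall>B\<in>\<B>. is_ball \<nu> B) \<and> (\<forall>A\<in>\<B>. \<forall>B\<in>\<B>. A \<subseteq> B \<or> B \<subseteq> A)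
           \<longrightarrow> \<Inter>\<B> \<noteq> {})"

definition val_ring :: "('k::field \<Rightarrow> 'g::linordered_ab_group_add extv) \<Rightarrow> 'k set" where
  "val_ring \<nu> = {x. Fin 0 \<le> \<nu> x}"

definition vec_val :: "('k::field \<Rightarrow> 'g::linorder extv) \<Rightarrow> 'k ^ 'n \<Rightarrow> 'g extv" where
  "vec_val \<nu> v = Min (range (\<lambda>i. \<nu> (v $ i)))"

definition is_O_submodule :: "('k::field \<Rightarrow> 'g::linordered_ab_group_add extv) \<Rightarrow> ('k ^ 'n) set \<Rightarrow> bool" where
  "is_O_submodule \<nu> C \<longleftrightarrow> 0 \<in> C \<and> (\<forall>x\<in>C. \<forall>y\<in>C. x + y \<in> C) \<and>
     (\<forall>a\<in>val_ring \<nu>. \<forall>x\<in>C. a *s x \<in> C)"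

definition upwards_closed :: "'g::linorder extv set \<Rightarrow> bool" where
  "upwards_closed \<Delta> \<longleftrightarrow> (\<forall>\<gamma>\<in>\<Delta>. \<forall>\<delta>. \<gamma> \<le> \<delta> \<longrightarrow> \<delta> \<in> \<Delta>)"

end

theory Submission
  imports Defs
begin

text \<open>
  Choose a basis \<open>w\<close> of a subspace \<open>V \<supseteq> C\<close> that is orthonormal for the valuation: the valuation of
  \<open>\<Sum>i. l i *s w i\<close> is the minimum of the \<open>\<nu> (l i)\<close>. The sets \<open>{x. x *s w i \<in> C}\<close> are
  \<open>O\<close>-submodules of \<open>K\<close>, hence totally ordered; let \<open>D\<close> be the smallest one, attained at
  \<open>w j\<close>, and \<open>\<Delta> = \<nu> ` D\<close>. By orthonormality every vector of valuation in \<open>\<Delta>\<close> lies in \<open>C\<close>.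
  Spherical completeness yields a Hahn--Banach extension: a linear functional \<open>a\<close> with
  \<open>a (w j) = 1\<close> and \<open>a C \<subseteq> D\<close>. Then \<open>c = (c - a c *s w j) + a c *s w j\<close> splits \<open>C\<close> into
  \<open>C \<inter> ker a\<close> plus vectors of valuation in \<open>\<Delta>\<close>, and induction on \<open>dim V\<close> applied to
  \<open>C \<inter> ker a\<close> produces the flag, with \<open>\<Delta>\<close> as the last and smallest valuation set.
\<close>

lemma extv_le_Infty [simp]: "x \<le> (Infty :: 'a::linorder extv)"
  by (cases x) auto

lemma Infty_le_iff [simp]: "Infty \<le> x \<longleftrightarrow> x = (Infty :: 'a::linorder extv)"
  by (cases x) auto

lemma ext_add_mono: "a \<le> b \<Longrightarrow> ext_add c a \<le> ext_add (c::'g::linordered_ab_group_add extv) b"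
  by (cases a; cases b; cases c) auto

lemma ext_add_Fin_0 [simp]:
  "ext_add (Fin 0) a = a" "ext_add a (Fin 0) = (a::'g::linordered_ab_group_add extv)"
  by (cases a; simp)+

lemma vec_val_ge_iff: "\<delta> \<le> vec_val \<nu> v \<longleftrightarrow> (\<forall>i. \<delta> \<le> \<nu> (v $ i))"
  unfolding vec_val_def by (subst Min_ge_iff) auto

lemma vec_val_le: "vec_val \<nu> v \<le> \<nu> (v $ i)"
  using vec_val_ge_iff by blast

lemma vec_val_attained: "\<exists>i. vec_val \<nu> v = \<nu> (v $ i)"
proof -
  have "Min (range (\<lambda>i. \<nu> (v $ i))) \<in> range (\<lambda>i. \<nu> (v $ i))"
    by (rule Min_in) auto
  then show ?thesis
    unfolding vec_val_def by blast
qed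

lemma upwards_closed_Un: "upwards_closed A \<Longrightarrow> upwards_closed B \<Longrightarrow> upwards_closed (A \<union> B)"
  unfolding upwards_closed_def by blast

lemma upwards_closed_Infty: "upwards_closed \<Delta> \<Longrightarrow> \<Delta> \<noteq> {} \<Longrightarrow> Infty \<in> \<Delta>"
  unfolding upwards_closed_def using extv_le_Infty by blast

definition is_O_submodule_K ::
    "('k::field \<Rightarrow> 'g::linordered_ab_group_add extv) \<Rightarrow> 'k set \<Rightarrow> bool" where
  "is_O_submodule_K \<nu> D \<longleftrightarrow>
     0 \<in> D \<and> (\<forall>x\<in>D. \<forall>y\<in>D. x + y \<in> D) \<and> (\<forall>a\<in>val_ring \<nu>. \<forall>x\<in>D. a * x \<in> D)"

lemma sum_scale_in_span: "(\<Sum>i\<in>A. l i *s w i) \<in> vec.span (w ` A)"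
  by (intro vec.span_sum vec.span_scale vec.span_base) auto

lemma span_image_sum_repr:
  assumes "finite A" "x \<in> vec.span (w ` A)"
  shows "\<exists>l. x = (\<Sum>i\<in>A. l i *s (w i :: 'a::field^'n))"
  using assms
proof (induction A arbitrary: x rule: finite_induct)
  case (insert m A)
  obtain c where "x - c *s w m \<in> vec.span (w ` A)"
    using insert.prems by (auto simp: vec.span_insert)
  then obtain l where l: "x - c *s w m = (\<Sum>i\<in>A. l i *s w i)"
    using insert.IH by blast
  have "(\<Sum>i\<in>A. (l(m := c)) i *s w i) = (\<Sum>i\<in>A. l i *s w i)"
    using insert.hyps by (intro sum.cong) auto
  then have "x = (\<Sum>i\<in>insert m A. (l(m := c)) i *s w i)"
    using insert.hyps l by (simp add: algebra_simps)
  then show ?case by blast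
qed simp

lemma subspace_coordinate_zero:
  "vec.subspace V \<Longrightarrow> vec.subspace {x \<in> V. x $ p = 0}"
  unfolding vec.subspace_def by simp

lemma span_insert_coordinate_zero:
  assumes V: "vec.subspace V" and u: "u \<in> V" "u $ p = 1"
  shows "vec.span (insert u {x \<in> V. x $ p = 0}) = V"
proof -
  have "x \<in> V \<longleftrightarrow> (\<exists>c. x - c *s u \<in> {x \<in> V. x $ p = 0})" for x
  proof
    assume "x \<in> V"
    then have "x - (x $ p) *s u \<in> {x \<in> V. x $ p = 0}"
      using vec.subspace_diff[OF V _ vec.subspace_scale[OF V u(1)]] u(2) by simp
    then show "\<exists>c. x - c *s u \<in> {x \<in> V. x $ p = 0}" ..
  next
    assume "\<exists>c. x - c *s u \<in> {x \<in> V. x $ p = 0}"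
    then obtain c where "x - c *s u \<in> V" by blast
    then have "(x - c *s u) + c *s u \<in> V"
      using vec.subspace_add[OF V _ vec.subspace_scale[OF V u(1)]] by blast
    then show "x \<in> V" by simp
  qed
  then show ?thesis
    unfolding vec.span_insert vec.span_eq_iff[THEN iffD2, OF subspace_coordinate_zero[OF V]]
    by blast
qed

lemma sum_lessThan_indicator_scale:
  "j < (k::nat) \<Longrightarrow> (\<Sum>i<k. (if i = j then c else 0) *s w i) = c *s (w j :: 'a::field^'n)"
  by (subst sum.mono_neutral_right[of _ "{j}"]) auto

lemma sum_lessThan_indicator_mult:
  "j < (k::nat) \<Longrightarrow> (\<Sum>i<k. (if i = j then c else 0) * a i) = c * (a j :: 'a::field)"
  by (subst sum.mono_neutral_right[of _ "{j}"]) auto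

lemma lessThan_chain_has_least:
  fixes D :: "nat \<Rightarrow> 'a set"
  assumes "k \<noteq> 0" and chain: "\<And>i i'. D i \<subseteq> D i' \<or> D i' \<subseteq> D i"
  shows "\<exists>j<k. \<forall>i<k. D j \<subseteq> D i"
proof -
  have "\<Inter> (D ` {..<k}) \<in> D ` {..<k}"
    using assms by (intro Inter_in_chain[where \<A> = UNIV]) (auto simp: subset_chain_def)
  then obtain j where "j < k" "D j = \<Inter> (D ` {..<k})"
    by (metis imageE lessThan_iff)
  then show ?thesis
    by blast
qed

definition coordinate_kernel :: "(nat \<Rightarrow> 'a::field^'n) \<Rightarrow> nat \<Rightarrow> (nat \<Rightarrow> 'a) \<Rightarrow> ('a^'n) set" where
  "coordinate_kernel w k a = {(\<Sum>i<k. l i *s w i) | l. (\<Sum>i<k. l i * a i) = 0}"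

lemma subspace_coordinate_kernel: "vec.subspace (coordinate_kernel w k a)"
proof (rule vec.subspaceI)
  show "0 \<in> coordinate_kernel w k a"
    unfolding coordinate_kernel_def by (intro CollectI exI[of _ "\<lambda>_. 0"]) simp
  show "x + y \<in> coordinate_kernel w k a"
    if "x \<in> coordinate_kernel w k a" "y \<in> coordinate_kernel w k a" for x y
  proof -
    obtain l1 l2 where "x = (\<Sum>i<k. l1 i *s w i)" "(\<Sum>i<k. l1 i * a i) = 0"
      "y = (\<Sum>i<k. l2 i *s w i)" "(\<Sum>i<k. l2 i * a i) = 0"
      using \<open>x \<in> coordinate_kernel w k a\<close> \<open>y \<in> coordinate_kernel w k a\<close>
      unfolding coordinate_kernel_def by blast
    then show ?thesis
      unfolding coordinate_kernel_def
      by (intro CollectI exI[of _ "\<lambda>i. l1 i + l2 i"])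
        (simp add: vector_sadd_rdistrib sum.distrib distrib_right)
  qed
  show "c *s x \<in> coordinate_kernel w k a" if "x \<in> coordinate_kernel w k a" for c x
  proof -
    obtain l where "x = (\<Sum>i<k. l i *s w i)" "(\<Sum>i<k. l i * a i) = 0"
      using \<open>x \<in> coordinate_kernel w k a\<close> unfolding coordinate_kernel_def by blast
    then show ?thesis
      unfolding coordinate_kernel_def
      by (intro CollectI exI[of _ "\<lambda>i. c * l i"])
        (simp add: vec.scale_sum_right vector_smult_assoc mult.assoc flip: sum_distrib_left)
  qed
qed

lemma coordinate_kernel_subset_span: "coordinate_kernel w k a \<subseteq> vec.span (w ` {..<k})"
  unfolding coordinate_kernel_def using sum_scale_in_span by blast

lemma sum_minus_coordinate_in_kernel:
  assumes j: "j < k" and a: "a j = 1"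
  shows "(\<Sum>i<k. l i *s w i) - (\<Sum>i<k. l i * a i) *s w j \<in> coordinate_kernel w k a"
proof -
  define s where "s = (\<Sum>i<k. l i * a i)"
  define l' where "l' i = l i - (if i = j then s else 0)" for i
  have "(\<Sum>i<k. l' i *s w i) = (\<Sum>i<k. l i *s w i) - s *s w j"
    unfolding l'_def
    by (simp add: vector_sub_rdistrib sum_subtractf sum_lessThan_indicator_scale[OF j])
  moreover have "(\<Sum>i<k. l' i * a i) = 0"
    unfolding l'_def using a
    by (simp add: left_diff_distrib sum_subtractf sum_lessThan_indicator_mult[OF j] s_def)
  ultimately show ?thesis
    unfolding coordinate_kernel_def s_def by (intro CollectI exI[of _ l']) simp
qed

lemma dim_span_coordinate_kernel:
  assumes j: "j < k" and a: "a j = 1" and notin: "w j \<notin> coordinate_kernel w k a"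
  shows "vec.dim (vec.span (w ` {..<k})) = Suc (vec.dim (coordinate_kernel w k a))"
proof -
  let ?H = "coordinate_kernel w k a"
  have "vec.span (insert (w j) ?H) = vec.span (w ` {..<k})"
  proof
    show "vec.span (insert (w j) ?H) \<subseteq> vec.span (w ` {..<k})"
      using coordinate_kernel_subset_span j
      by (intro vec.span_minimal) (auto intro: vec.span_base)
    show "vec.span (w ` {..<k}) \<subseteq> vec.span (insert (w j) ?H)"
    proof
      fix x assume "x \<in> vec.span (w ` {..<k})"
      then obtain l where "x = (\<Sum>i<k. l i *s w i)"
        using span_image_sum_repr[of "{..<k}" x w] by auto
      then have "x - (\<Sum>i<k. l i * a i) *s w j \<in> vec.span ?H"
        using sum_minus_coordinate_in_kernel[where a = a, OF j a] vec.span_base by metis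
      then show "x \<in> vec.span (insert (w j) ?H)"
        unfolding vec.span_insert by blast
    qed
  qed
  then show ?thesis
    using vec.dim_insert[of "w j" ?H] notin
      vec.span_eq_iff[THEN iffD2, OF subspace_coordinate_kernel]
    by (metis vec.dim_span Suc_eq_plus1)
qed

locale valued_field =
  fixes \<nu> :: "'k::field \<Rightarrow> 'g::linordered_ab_group_add extv"
  assumes valuation: "valuation \<nu>"
begin

lemma val_eq_Infty_iff [simp]: "\<nu> x = Infty \<longleftrightarrow> x = 0"
  using valuation unfolding valuation_def by blast

lemma val_zero [simp]: "\<nu> 0 = Infty"
  by simp

lemma val_mult: "\<nu> (x * y) = ext_add (\<nu> x) (\<nu> y)"
  using valuation unfolding valuation_def by blast

lemma val_add_ge: "min (\<nu> x) (\<nu> y) \<le> \<nu> (x + y)"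
  using valuation unfolding valuation_def by blast

lemma val_surj: "\<exists>x. \<nu> x = Fin \<gamma>"
  using valuation unfolding valuation_def by blast

lemma val_Fin: "x \<noteq> 0 \<Longrightarrow> \<exists>a. \<nu> x = Fin a"
  by (cases "\<nu> x") auto

lemma val_one [simp]: "\<nu> 1 = Fin 0"
proof -
  obtain a where a: "\<nu> 1 = Fin a" using val_Fin[of 1] by auto
  then have "a + a = a" using val_mult[of 1 1] by simp
  then show ?thesis using a by simp
qed

lemma val_minus_one [simp]: "\<nu> (- 1) = Fin 0"
proof -
  obtain a where a: "\<nu> (- 1) = Fin a" using val_Fin[of "- 1"] by auto
  then have "a + a = 0" using val_mult[of "- 1" "- 1"] by simp
  then have "a = 0"
    by (metis add_neg_neg add_pos_pos less_irrefl linorder_neqE)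
  then show ?thesis using a by simp
qed

lemma val_uminus [simp]: "\<nu> (- x) = \<nu> x"
  using val_mult[of "- 1" x] by simp

lemma val_inverse: "x \<noteq> 0 \<Longrightarrow> ext_add (\<nu> (inverse x)) (\<nu> x) = Fin 0"
  by (metis val_mult left_inverse val_one)

lemma val_divide_nonneg:
  assumes "x \<noteq> 0" "\<nu> x \<le> \<nu> y"
  shows "Fin 0 \<le> \<nu> (y / x)"
proof (cases "y = 0")
  case False
  obtain a b c where "\<nu> x = Fin a" "\<nu> y = Fin b" "\<nu> (y / x) = Fin c"
    using val_Fin assms(1) False by (metis divide_eq_0_iff)
  moreover have "\<nu> y = ext_add (\<nu> (y / x)) (\<nu> x)"
    using val_mult[of "y / x" x] assms(1) by simp
  ultimately show ?thesis using assms(2) by (simp, metis le_add_same_cancel2)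
qed simp

lemma val_mult_mono: "Fin 0 \<le> \<nu> a \<Longrightarrow> \<nu> x \<le> \<nu> (a * x)"
  unfolding val_mult by (cases "\<nu> a"; cases "\<nu> x") auto

lemma vec_val_zero [simp]: "vec_val \<nu> 0 = Infty"
  using vec_val_ge_iff[of Infty \<nu> 0] by simp

lemma vec_val_eq_Infty_iff: "vec_val \<nu> v = Infty \<longleftrightarrow> v = 0"
  using vec_val_ge_iff[of Infty \<nu> v] by (auto simp: vec_eq_iff)

lemma vec_val_add_ge: "min (vec_val \<nu> x) (vec_val \<nu> y) \<le> vec_val \<nu> (x + y)"
  unfolding vec_val_ge_iff
proof
  fix i
  have "min (vec_val \<nu> x) (vec_val \<nu> y) \<le> min (\<nu> (x $ i)) (\<nu> (y $ i))"
    by (intro min.mono vec_val_le)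
  also have "\<dots> \<le> \<nu> ((x + y) $ i)"
    using val_add_ge by simp
  finally show "min (vec_val \<nu> x) (vec_val \<nu> y) \<le> \<nu> ((x + y) $ i)" .
qed

lemma vec_val_uminus [simp]: "vec_val \<nu> (- x) = vec_val \<nu> x"
  unfolding vec_val_def by simp

lemma vec_val_diff_ge: "min (vec_val \<nu> x) (vec_val \<nu> y) \<le> vec_val \<nu> (x - y)"
  using vec_val_add_ge[of x "- y"] by simp

lemma vec_val_scale: "vec_val \<nu> (c *s v) = ext_add (\<nu> c) (vec_val \<nu> v)"
proof (rule antisym)
  obtain p where "vec_val \<nu> v = \<nu> (v $ p)" using vec_val_attained by blast
  then show "vec_val \<nu> (c *s v) \<le> ext_add (\<nu> c) (vec_val \<nu> v)"
    using vec_val_le[of \<nu> "c *s v" p] by (simp add: val_mult)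
  show "ext_add (\<nu> c) (vec_val \<nu> v) \<le> vec_val \<nu> (c *s v)"
    unfolding vec_val_ge_iff by (simp add: val_mult ext_add_mono vec_val_le)
qed

lemma O_submodule_zero: "is_O_submodule \<nu> C \<Longrightarrow> 0 \<in> C"
  unfolding is_O_submodule_def by blast

lemma O_submodule_add: "is_O_submodule \<nu> C \<Longrightarrow> x \<in> C \<Longrightarrow> y \<in> C \<Longrightarrow> x + y \<in> C"
  unfolding is_O_submodule_def by blast

lemma O_submodule_scale: "is_O_submodule \<nu> C \<Longrightarrow> Fin 0 \<le> \<nu> a \<Longrightarrow> x \<in> C \<Longrightarrow> a *s x \<in> C"
  unfolding is_O_submodule_def val_ring_def by blast

lemma O_submodule_diff: "is_O_submodule \<nu> C \<Longrightarrow> x \<in> C \<Longrightarrow> y \<in> C \<Longrightarrow> x - y \<in> C"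
  using O_submodule_add O_submodule_scale[of C "- 1" y] by fastforce

lemma O_submodule_sum:
  "is_O_submodule \<nu> C \<Longrightarrow> (\<And>i. i \<in> A \<Longrightarrow> f i \<in> C) \<Longrightarrow> sum f A \<in> C"
  by (induction A rule: infinite_finite_induct) (auto intro: O_submodule_zero O_submodule_add)

lemma O_submodule_Int_subspace:
  "is_O_submodule \<nu> C \<Longrightarrow> vec.subspace H \<Longrightarrow> is_O_submodule \<nu> (C \<inter> H)"
  unfolding is_O_submodule_def vec.subspace_def by blast

lemma O_submodule_K_zero: "is_O_submodule_K \<nu> D \<Longrightarrow> 0 \<in> D"
  unfolding is_O_submodule_K_def by blast

lemma O_submodule_K_add: "is_O_submodule_K \<nu> D \<Longrightarrow> x \<in> D \<Longrightarrow> y \<in> D \<Longrightarrow> x + y \<in> D"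
  unfolding is_O_submodule_K_def by blast

lemma O_submodule_K_mult: "is_O_submodule_K \<nu> D \<Longrightarrow> Fin 0 \<le> \<nu> a \<Longrightarrow> x \<in> D \<Longrightarrow> a * x \<in> D"
  unfolding is_O_submodule_K_def val_ring_def by blast

lemma O_submodule_K_diff: "is_O_submodule_K \<nu> D \<Longrightarrow> x \<in> D \<Longrightarrow> y \<in> D \<Longrightarrow> x - y \<in> D"
  using O_submodule_K_add O_submodule_K_mult[of D "- 1" y] by fastforce

lemma O_submodule_K_val_mono:
  assumes D: "is_O_submodule_K \<nu> D" and "x \<in> D" "\<nu> x \<le> \<nu> y"
  shows "y \<in> D"
proof (cases "x = 0")
  case True
  then show ?thesis using assms O_submodule_K_zero[OF D] by simp
next
  case False
  have "(y / x) * x \<in> D"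
    using O_submodule_K_mult[OF D val_divide_nonneg[OF False assms(3)] assms(2)] .
  then show ?thesis using False by simp
qed

lemma O_submodule_K_linear:
  assumes "is_O_submodule_K \<nu> D" "is_O_submodule_K \<nu> E"
  shows "D \<subseteq> E \<or> E \<subseteq> D"
  using O_submodule_K_val_mono[OF assms(1)] O_submodule_K_val_mono[OF assms(2)]
  by (meson linear subsetI)

lemma O_submodule_K_val_ge: "is_O_submodule_K \<nu> {x. Fin r \<le> \<nu> x}"
  unfolding is_O_submodule_K_def val_ring_def
  by (auto intro: order_trans val_mult_mono order_trans[OF _ val_add_ge])

lemma O_submodule_K_line:
  assumes C: "is_O_submodule \<nu> C"
  shows "is_O_submodule_K \<nu> {x. x *s w \<in> C}"
  unfolding is_O_submodule_K_def val_ring_def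
proof (intro conjI ballI)
  show "0 \<in> {x. x *s w \<in> C}"
    using O_submodule_zero[OF C] by simp
  show "x + y \<in> {x. x *s w \<in> C}" if "x \<in> {x. x *s w \<in> C}" "y \<in> {x. x *s w \<in> C}" for x y
    using that O_submodule_add[OF C] by (simp add: vector_sadd_rdistrib)
  show "a * x \<in> {x. x *s w \<in> C}" if "a \<in> {a. Fin 0 \<le> \<nu> a}" "x \<in> {x. x *s w \<in> C}" for a x
    using that O_submodule_scale[OF C, of a "x *s w"] by (simp add: vector_smult_assoc)
qed

lemma O_submodule_K_val_image:
  assumes D: "is_O_submodule_K \<nu> D"
  shows "x \<in> D \<longleftrightarrow> \<nu> x \<in> \<nu> ` D" and "\<nu> ` D \<noteq> {}" and "upwards_closed (\<nu> ` D)"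
proof -
  show "x \<in> D \<longleftrightarrow> \<nu> x \<in> \<nu> ` D"
    using O_submodule_K_val_mono[OF D] by force
  show "\<nu> ` D \<noteq> {}"
    using O_submodule_K_zero[OF D] by blast
  have "\<delta> \<in> range \<nu>" for \<delta>
    using val_surj val_zero by (cases \<delta>) (metis rangeI)+
  then show "upwards_closed (\<nu> ` D)"
    unfolding upwards_closed_def using O_submodule_K_val_mono[OF D] by fast
qed

lemma O_submodule_K_scaled:
  assumes D: "is_O_submodule_K \<nu> D"
  shows "is_O_submodule_K \<nu> {x. c * x \<in> D}"
  unfolding is_O_submodule_K_def val_ring_def
proof (intro conjI ballI)
  show "0 \<in> {x. c * x \<in> D}"
    using O_submodule_K_zero[OF D] by simp
  show "x + y \<in> {x. c * x \<in> D}" if "x \<in> {x. c * x \<in> D}" "y \<in> {x. c * x \<in> D}" for x y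
    using that O_submodule_K_add[OF D] by (simp add: distrib_left)
  show "a * x \<in> {x. c * x \<in> D}" if "a \<in> {a. Fin 0 \<le> \<nu> a}" "x \<in> {x. c * x \<in> D}" for a x
    using that O_submodule_K_mult[OF D, of a "c * x"] by (simp add: mult.left_commute)
qed

lemma O_coset_recenter:
  assumes D: "is_O_submodule_K \<nu> D" and ab: "b - a \<in> D"
  shows "{t. t - b \<in> D} = {t. t - a \<in> D}"
proof -
  have "t - b \<in> D \<longleftrightarrow> t - a \<in> D" for t
  proof
    assume "t - b \<in> D"
    then have "(t - b) + (b - a) \<in> D"
      using O_submodule_K_add[OF D _ ab] by blast
    then show "t - a \<in> D" by simp
  next
    assume "t - a \<in> D"
    then have "(t - a) - (b - a) \<in> D"
      using O_submodule_K_diff[OF D _ ab] by blast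
    then show "t - b \<in> D" by simp
  qed
  then show ?thesis by blast
qed

lemma O_cosets_nested:
  assumes D: "is_O_submodule_K \<nu> D" and E: "is_O_submodule_K \<nu> E"
    and "p - a \<in> D" "p - b \<in> E"
  shows "{t. t - a \<in> D} \<subseteq> {t. t - b \<in> E} \<or> {t. t - b \<in> E} \<subseteq> {t. t - a \<in> D}"
  unfolding O_coset_recenter[OF D assms(3), symmetric] O_coset_recenter[OF E assms(4), symmetric]
  using O_submodule_K_linear[OF D E] by blast

lemma closed_ball_between_O_cosets:
  assumes D: "is_O_submodule_K \<nu> D" and E: "is_O_submodule_K \<nu> E"
    and sub: "{t. t - b \<in> E} \<subset> {t. t - a \<in> D}"
  shows "\<exists>r. {t. t - b \<in> E} \<subseteq> {t. Fin r \<le> \<nu> (t - b)} \<and> {t. Fin r \<le> \<nu> (t - b)} \<subseteq> {t. t - a \<in> D}"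
proof -
  have "b \<in> {t. t - b \<in> E}"
    using O_submodule_K_zero[OF E] by simp
  then have "b - a \<in> D"
    using sub by blast
  then have outer: "{t. t - a \<in> D} = {t. t - b \<in> D}"
    using O_coset_recenter[OF D] by blast
  obtain t0 where "t0 \<in> {t. t - b \<in> D}" "t0 \<notin> {t. t - b \<in> E}"
    using psubset_imp_ex_mem[OF sub] unfolding outer by blast
  then have t0: "t0 - b \<in> D" "t0 - b \<notin> E"
    by simp_all
  then have "t0 - b \<noteq> 0"
    using O_submodule_K_zero[OF E] by auto
  then obtain r where r: "\<nu> (t0 - b) = Fin r"
    using val_Fin by blast
  have "t - b \<in> D" if "Fin r \<le> \<nu> (t - b)" for t
    using O_submodule_K_val_mono[OF D t0(1)] that r by simp
  moreover have "Fin r \<le> \<nu> (t - b)" if t: "t - b \<in> E" for t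
  proof (rule ccontr)
    assume "\<not> Fin r \<le> \<nu> (t - b)"
    then have "\<nu> (t - b) \<le> \<nu> (t0 - b)"
      unfolding r by simp
    then show False
      using O_submodule_K_val_mono[OF E t] t0(2) by blast
  qed
  ultimately show ?thesis
    unfolding outer by blast
qed

lemma closed_balls_nested:
  assumes "Fin r1 \<le> \<nu> (p - b1)" "Fin r2 \<le> \<nu> (p - b2)"
  shows "{t. Fin r1 \<le> \<nu> (t - b1)} \<subseteq> {t. Fin r2 \<le> \<nu> (t - b2)} \<or>
         {t. Fin r2 \<le> \<nu> (t - b2)} \<subseteq> {t. Fin r1 \<le> \<nu> (t - b1)}"
  using O_cosets_nested[OF O_submodule_K_val_ge O_submodule_K_val_ge, of p b1 r1 b2 r2] assms
  by simp

lemma O_coset_chain_closed_balls_below: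
  assumes cosets: "\<And>X. X \<in> \<G> \<Longrightarrow> \<exists>a D. is_O_submodule_K \<nu> D \<and> X = {t. t - a \<in> D}"
    and chain: "\<And>X Y. X \<in> \<G> \<Longrightarrow> Y \<in> \<G> \<Longrightarrow> X \<subseteq> Y \<or> Y \<subseteq> X"
    and no_least: "\<not> (\<exists>X\<in>\<G>. \<forall>Y\<in>\<G>. X \<subseteq> Y)"
  shows "\<forall>X\<in>\<G>. \<exists>B. (\<exists>b r. B = {t. Fin r \<le> \<nu> (t - b)}) \<and> B \<subseteq> X \<and> (\<exists>Y\<in>\<G>. Y \<subseteq> B)"
proof
  fix X assume X: "X \<in> \<G>"
  then obtain Y where Y: "Y \<in> \<G>" "\<not> X \<subseteq> Y"
    using no_least by blast
  then have "Y \<subset> X"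
    using chain X by blast
  moreover obtain a D where D: "is_O_submodule_K \<nu> D" and "X = {t. t - a \<in> D}"
    using cosets X by blast
  moreover obtain b E where E: "is_O_submodule_K \<nu> E" and "Y = {t. t - b \<in> E}"
    using cosets Y(1) by blast
  ultimately obtain r where "Y \<subseteq> {t. Fin r \<le> \<nu> (t - b)}" "{t. Fin r \<le> \<nu> (t - b)} \<subseteq> X"
    using closed_ball_between_O_cosets[OF D E, of b a] by blast
  then show "\<exists>B. (\<exists>b r. B = {t. Fin r \<le> \<nu> (t - b)}) \<and> B \<subseteq> X \<and> (\<exists>Y\<in>\<G>. Y \<subseteq> B)"
    using Y(1) by blast
qed

text \<open>If the chain has no least element, the closed balls of the previous lemma form a chain
  as well, because any two of them contain a common member of the chain.\<close>

lemma spherically_complete_O_coset_chain: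
  assumes sc: "spherically_complete \<nu>"
    and cosets: "\<And>X. X \<in> \<G> \<Longrightarrow> \<exists>a D. is_O_submodule_K \<nu> D \<and> X = {t. t - a \<in> D}"
    and chain: "\<And>X Y. X \<in> \<G> \<Longrightarrow> Y \<in> \<G> \<Longrightarrow> X \<subseteq> Y \<or> Y \<subseteq> X"
  shows "\<exists>t. \<forall>X\<in>\<G>. t \<in> X"
proof -
  have nonempty: "\<exists>p. p \<in> X" if X: "X \<in> \<G>" for X
  proof -
    obtain a D where "is_O_submodule_K \<nu> D" "X = {t. t - a \<in> D}"
      using cosets[OF X] by blast
    then have "a \<in> X"
      using O_submodule_K_zero by simp
    then show ?thesis ..
  qed
  show ?thesis
  proof (cases "\<exists>X\<in>\<G>. \<forall>Y\<in>\<G>. X \<subseteq> Y")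
    case True
    then show ?thesis
      using nonempty by blast
  next
    case False
    then have "\<forall>X\<in>\<G>. \<exists>B. (\<exists>b r. B = {t. Fin r \<le> \<nu> (t - b)}) \<and> B \<subseteq> X \<and> (\<exists>Y\<in>\<G>. Y \<subseteq> B)"
      using O_coset_chain_closed_balls_below[of \<G>] cosets chain by blast
    then obtain \<beta> where
      \<beta>_ball: "\<And>X. X \<in> \<G> \<Longrightarrow> \<exists>b r. \<beta> X = {t. Fin r \<le> \<nu> (t - b)}" and
      \<beta>_sub: "\<And>X. X \<in> \<G> \<Longrightarrow> \<beta> X \<subseteq> X" and
      \<beta>_above: "\<And>X. X \<in> \<G> \<Longrightarrow> \<exists>Y\<in>\<G>. Y \<subseteq> \<beta> X"
      by (elim bchoice [THEN exE]) blast
    have balls_nested: "\<beta> X1 \<subseteq> \<beta> X2 \<or> \<beta> X2 \<subseteq> \<beta> X1" if X: "X1 \<in> \<G>" "X2 \<in> \<G>" for X1 X2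
    proof -
      obtain Y1 Y2 where "Y1 \<in> \<G>" "Y1 \<subseteq> \<beta> X1" "Y2 \<in> \<G>" "Y2 \<subseteq> \<beta> X2"
        using \<beta>_above X by blast
      then have "\<exists>Y\<in>\<G>. Y \<subseteq> \<beta> X1 \<inter> \<beta> X2"
        using chain[of Y1 Y2] by blast
      then obtain p where p: "p \<in> \<beta> X1" "p \<in> \<beta> X2"
        using nonempty by blast
      obtain b1 r1 where "\<beta> X1 = {t. Fin r1 \<le> \<nu> (t - b1)}"
        using \<beta>_ball[OF X(1)] by blast
      moreover obtain b2 r2 where "\<beta> X2 = {t. Fin r2 \<le> \<nu> (t - b2)}"
        using \<beta>_ball[OF X(2)] by blast
      ultimately show ?thesis
        using closed_balls_nested[of r1 p b1 r2 b2] p by simp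
    qed
    have "\<forall>B\<in>\<beta> ` \<G>. is_ball \<nu> B"
      using \<beta>_ball unfolding is_ball_def by blast
    moreover have "\<forall>A\<in>\<beta> ` \<G>. \<forall>B\<in>\<beta> ` \<G>. A \<subseteq> B \<or> B \<subseteq> A"
      using balls_nested by blast
    ultimately obtain t where "t \<in> \<Inter> (\<beta> ` \<G>)"
      using sc unfolding spherically_complete_def by (elim allE[of _ "\<beta> ` \<G>"]) blast
    then show ?thesis
      using \<beta>_sub by blast
  qed
qed

lemma functional_extension_mono:
  fixes w :: "nat \<Rightarrow> 'k^'n" and l1 l2 :: "nat \<Rightarrow> 'k"
  assumes C: "is_O_submodule \<nu> C" and D: "is_O_submodule_K \<nu> D"
    and ext: "\<And>l. (\<Sum>i\<in>T. l i *s w i) \<in> C \<Longrightarrow> \<forall>i\<in>T - S. l i = 0 \<Longrightarrow> (\<Sum>i\<in>S. l i * a i) \<in> D"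
    and l1: "(\<Sum>i\<in>T. l1 i *s w i) \<in> C" "\<forall>i\<in>T - insert m S. l1 i = 0" "l1 m \<noteq> 0"
    and l2: "(\<Sum>i\<in>T. l2 i *s w i) \<in> C" "\<forall>i\<in>T - insert m S. l2 i = 0"
    and le: "\<nu> (l1 m) \<le> \<nu> (l2 m)"
  shows "{t. (\<Sum>i\<in>S. l1 i * a i) + l1 m * t \<in> D} \<subseteq> {t. (\<Sum>i\<in>S. l2 i * a i) + l2 m * t \<in> D}"
proof
  define r where "r = l2 m / l1 m"
  have r: "Fin 0 \<le> \<nu> r" "r * l1 m = l2 m"
    using val_divide_nonneg[OF l1(3) le] l1(3) unfolding r_def by simp_all
  define \<mu> where "\<mu> i = r * l1 i - l2 i" for i
  have "(\<Sum>i\<in>T. \<mu> i *s w i) = r *s (\<Sum>i\<in>T. l1 i *s w i) - (\<Sum>i\<in>T. l2 i *s w i)"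
    unfolding \<mu>_def
    by (simp add: vector_sub_rdistrib vec.scale_sum_right sum_subtractf vector_smult_assoc)
  then have "(\<Sum>i\<in>T. \<mu> i *s w i) \<in> C"
    using O_submodule_diff[OF C O_submodule_scale[OF C r(1) l1(1)] l2(1)] by simp
  moreover have "\<forall>i\<in>T - S. \<mu> i = 0"
  proof
    fix i assume "i \<in> T - S"
    then show "\<mu> i = 0"
      using l1(2) l2(2) r(2) unfolding \<mu>_def by (cases "i = m") auto
  qed
  ultimately have \<mu>D: "(\<Sum>i\<in>S. \<mu> i * a i) \<in> D"
    by (rule ext)
  fix t assume "t \<in> {t. (\<Sum>i\<in>S. l1 i * a i) + l1 m * t \<in> D}"
  then have "r * ((\<Sum>i\<in>S. l1 i * a i) + l1 m * t) \<in> D"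
    using O_submodule_K_mult[OF D r(1)] by simp
  then have "r * ((\<Sum>i\<in>S. l1 i * a i) + l1 m * t) - (\<Sum>i\<in>S. \<mu> i * a i) \<in> D"
    using O_submodule_K_diff[OF D _ \<mu>D] by blast
  moreover have "r * ((\<Sum>i\<in>S. l1 i * a i) + l1 m * t) - (\<Sum>i\<in>S. \<mu> i * a i)
      = (\<Sum>i\<in>S. l2 i * a i) + l2 m * t"
    unfolding \<mu>_def using r(2)
    by (simp add: left_diff_distrib sum_subtractf sum_distrib_left algebra_simps)
  ultimately show "t \<in> {t. (\<Sum>i\<in>S. l2 i * a i) + l2 m * t \<in> D}"
    by simp
qed

text \<open>The new value \<open>t\<close> has to lie in every coset \<open>{t. (\<Sum>i\<in>S. l i * a i) + l m * t \<in> D}\<close>;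
  by the previous lemma these cosets are nested according to \<open>\<nu> (l m)\<close>.\<close>

lemma functional_extension_step:
  fixes w :: "nat \<Rightarrow> 'k^'n"
  assumes sc: "spherically_complete \<nu>" and C: "is_O_submodule \<nu> C" and D: "is_O_submodule_K \<nu> D"
    and ext: "\<And>l. (\<Sum>i\<in>T. l i *s w i) \<in> C \<Longrightarrow> \<forall>i\<in>T - S. l i = 0 \<Longrightarrow> (\<Sum>i\<in>S. l i * a i) \<in> D"
  shows "\<exists>t. \<forall>l. (\<Sum>i\<in>T. l i *s w i) \<in> C \<longrightarrow> (\<forall>i\<in>T - insert m S. l i = 0) \<longrightarrow>
           (\<Sum>i\<in>S. l i * a i) + l m * t \<in> D"
proof -
  define admissible where "admissible l \<longleftrightarrow>
    (\<Sum>i\<in>T. l i *s w i) \<in> C \<and> (\<forall>i\<in>T - insert m S. l i = 0) \<and> l m \<noteq> 0" for l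
  define X where "X l = {t. (\<Sum>i\<in>S. l i * a i) + l m * t \<in> D}" for l
  have mono: "X l1 \<subseteq> X l2" if "admissible l1" "admissible l2" "\<nu> (l1 m) \<le> \<nu> (l2 m)" for l1 l2
    unfolding X_def
    by (rule functional_extension_mono[OF C D, where T = T and w = w and S = S and a = a, OF ext])
      (use that in \<open>unfold admissible_def, blast+\<close>)
  have "\<exists>t. \<forall>Y\<in>X ` Collect admissible. t \<in> Y"
  proof (rule spherically_complete_O_coset_chain[OF sc])
    fix Y assume "Y \<in> X ` Collect admissible"
    then obtain l where l: "l m \<noteq> 0" "Y = X l"
      unfolding admissible_def by blast
    have "l m * (t - (- (\<Sum>i\<in>S. l i * a i) / l m)) = (\<Sum>i\<in>S. l i * a i) + l m * t" for t
      using l(1) by (simp add: field_simps)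
    then have "Y = {t. t - (- (\<Sum>i\<in>S. l i * a i) / l m) \<in> {x. l m * x \<in> D}}"
      unfolding l(2) X_def by simp
    then show "\<exists>a E. is_O_submodule_K \<nu> E \<and> Y = {t. t - a \<in> E}"
      using O_submodule_K_scaled[OF D] by blast
  next
    fix Y Z assume "Y \<in> X ` Collect admissible" "Z \<in> X ` Collect admissible"
    then obtain l1 l2 where "admissible l1" "Y = X l1" "admissible l2" "Z = X l2"
      by blast
    then show "Y \<subseteq> Z \<or> Z \<subseteq> Y"
      using mono[of l1 l2] mono[of l2 l1] by (cases "\<nu> (l1 m) \<le> \<nu> (l2 m)") auto
  qed
  then obtain t where t: "\<And>l. admissible l \<Longrightarrow> t \<in> X l"
    by blast
  have "(\<Sum>i\<in>S. l i * a i) + l m * t \<in> D"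
    if l: "(\<Sum>i\<in>T. l i *s w i) \<in> C" "\<forall>i\<in>T - insert m S. l i = 0" for l
  proof (cases "l m = 0")
    case True
    then have "\<forall>i\<in>T - S. l i = 0"
      using l(2) by blast
    then show ?thesis
      using ext[OF l(1)] True by simp
  next
    case False
    then show ?thesis
      using t[of l] l unfolding admissible_def X_def by simp
  qed
  then show ?thesis
    by blast
qed

lemma functional_extension:
  fixes w :: "nat \<Rightarrow> 'k^'n"
  assumes sc: "spherically_complete \<nu>" and C: "is_O_submodule \<nu> C" and D: "is_O_submodule_K \<nu> D"
    and T: "finite T" "j \<in> T"
    and base: "\<And>x. x *s w j \<in> C \<Longrightarrow> x \<in> D"
  shows "\<exists>a. a j = 1 \<and> (\<forall>l. (\<Sum>i\<in>T. l i *s w i) \<in> C \<longrightarrow> (\<Sum>i\<in>T. l i * a i) \<in> D)"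
proof -
  have "finite S \<Longrightarrow> S \<subseteq> T - {j} \<Longrightarrow> \<exists>a. a j = 1 \<and> (\<forall>l. (\<Sum>i\<in>T. l i *s w i) \<in> C \<longrightarrow>
          (\<forall>i\<in>T - insert j S. l i = 0) \<longrightarrow> (\<Sum>i\<in>insert j S. l i * a i) \<in> D)" for S
  proof (induction S rule: finite_induct)
    case empty
    have "(\<Sum>i\<in>T. l i *s w i) = l j *s w j" if "\<forall>i\<in>T - {j}. l i = 0" for l
      using sum.mono_neutral_right[OF T(1), of "{j}" "\<lambda>i. l i *s w i"] T(2) that by simp
    then show ?case
      using base by (intro exI[of _ "\<lambda>_. 1"]) (simp, metis)
  next
    case (insert m S)
    obtain a where a: "a j = 1" and
      ext: "\<And>l. (\<Sum>i\<in>T. l i *s w i) \<in> C \<Longrightarrow> \<forall>i\<in>T - insert j S. l i = 0 \<Longrightarrow>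
              (\<Sum>i\<in>insert j S. l i * a i) \<in> D"
      using insert.IH insert.prems by blast
    obtain t where t: "\<And>l. (\<Sum>i\<in>T. l i *s w i) \<in> C \<Longrightarrow> \<forall>i\<in>T - insert m (insert j S). l i = 0 \<Longrightarrow>
        (\<Sum>i\<in>insert j S. l i * a i) + l m * t \<in> D"
      using functional_extension_step[OF sc C D ext] by blast
    have m: "m \<noteq> j" "m \<notin> insert j S"
      using insert.hyps insert.prems by auto
    have "(\<Sum>i\<in>insert j (insert m S). l i * (a(m := t)) i) = (\<Sum>i\<in>insert j S. l i * a i) + l m * t"
      for l :: "nat \<Rightarrow> 'k"
    proof -
      have "(\<Sum>i\<in>insert m (insert j S). l i * (a(m := t)) i)
          = l m * t + (\<Sum>i\<in>insert j S. l i * (a(m := t)) i)"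
        using m insert.hyps(1) by simp
      also have "(\<Sum>i\<in>insert j S. l i * (a(m := t)) i) = (\<Sum>i\<in>insert j S. l i * a i)"
        using m(2) by (intro sum.cong) auto
      finally show ?thesis
        by (simp add: insert_commute add.commute)
    qed
    then show ?case
      using a m t by (intro exI[of _ "a(m := t)"]) (simp add: insert_commute)
  qed
  from this[of "T - {j}"] T show ?thesis
    by (simp add: insert_absorb)
qed

definition orthonormal :: "(nat \<Rightarrow> 'k^'n) \<Rightarrow> nat \<Rightarrow> bool" where
  "orthonormal w k \<longleftrightarrow>
     (\<forall>l \<delta>. \<delta> \<le> vec_val \<nu> (\<Sum>i<k. l i *s w i) \<longleftrightarrow> (\<forall>i<k. \<delta> \<le> \<nu> (l i)))"

lemma orthonormal_coeff_ge:
  assumes "orthonormal w k" "i < k"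
  shows "vec_val \<nu> (\<Sum>i<k. l i *s w i) \<le> \<nu> (l i)"
  using assms unfolding orthonormal_def by blast

lemma orthonormal_val_basis:
  assumes w: "orthonormal w k" and j: "j < k"
  shows "vec_val \<nu> (w j) = Fin 0"
proof -
  define l where "l i = (if i = j then 1 else 0 :: 'k)" for i
  have "(\<Sum>i<k. l i *s w i) = (\<Sum>i\<in>{j}. l i *s w i)"
    using j by (intro sum.mono_neutral_right) (auto simp: l_def)
  then have "(\<Sum>i<k. l i *s w i) = w j"
    by (simp add: l_def)
  moreover have "(\<forall>i<k. \<delta> \<le> \<nu> (l i)) \<longleftrightarrow> \<delta> \<le> Fin 0" for \<delta>
    using j unfolding l_def by auto
  ultimately have "\<delta> \<le> vec_val \<nu> (w j) \<longleftrightarrow> \<delta> \<le> Fin 0" for \<delta>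
    using w unfolding orthonormal_def by metis
  then show ?thesis
    by (metis order_antisym order_refl)
qed

lemma orthonormal_coeffs_unique:
  assumes w: "orthonormal w k" and eq: "(\<Sum>i<k. l i *s w i) = (\<Sum>i<k. l' i *s w i)" and "i < k"
  shows "l i = l' i"
proof -
  have "(\<Sum>i<k. (l i - l' i) *s w i) = 0"
    using eq by (simp add: vector_sub_rdistrib sum_subtractf)
  then have "Infty \<le> \<nu> (l i - l' i)"
    using orthonormal_coeff_ge[OF w \<open>i < k\<close>, of "\<lambda>i. l i - l' i"] by simp
  then show ?thesis by simp
qed

lemma vec_val_scale_add_coordinate_zero:
  assumes u: "vec_val \<nu> u = Fin 0" "u $ p = 1" and x: "x $ p = 0"
  shows "vec_val \<nu> (c *s u + x) = min (\<nu> c) (vec_val \<nu> x)"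
proof -
  have cu: "vec_val \<nu> (c *s u) = \<nu> c"
    unfolding vec_val_scale u(1) by simp
  have le_c: "vec_val \<nu> (c *s u + x) \<le> \<nu> c"
    using vec_val_le[of \<nu> "c *s u + x" p] u(2) x by simp
  have "min (vec_val \<nu> (c *s u + x)) (\<nu> c) \<le> vec_val \<nu> x"
    using vec_val_diff_ge[of "c *s u + x" "c *s u"] unfolding cu by simp
  then have "vec_val \<nu> (c *s u + x) \<le> vec_val \<nu> x"
    using le_c by (simp add: min_absorb1)
  moreover have "min (\<nu> c) (vec_val \<nu> x) \<le> vec_val \<nu> (c *s u + x)"
    using vec_val_add_ge[of "c *s u" x] unfolding cu .
  ultimately show ?thesis
    using le_c by (simp add: antisym)
qed

lemma orthonormal_Suc:
  assumes w: "orthonormal w k" and u: "vec_val \<nu> u = Fin 0" "u $ p = 1"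
    and wp: "\<forall>i<k. w i $ p = 0"
  shows "orthonormal (case_nat u w) (Suc k)"
  unfolding orthonormal_def
proof (intro allI)
  fix l and \<delta> :: "'g extv"
  have "(\<Sum>i<k. l (Suc i) *s w i) $ p = 0"
    using wp by (simp add: sum_component)
  then have "vec_val \<nu> (\<Sum>i<Suc k. l i *s case_nat u w i)
      = min (\<nu> (l 0)) (vec_val \<nu> (\<Sum>i<k. l (Suc i) *s w i))"
    unfolding sum.lessThan_Suc_shift using vec_val_scale_add_coordinate_zero[OF u] by simp
  then show "\<delta> \<le> vec_val \<nu> (\<Sum>i<Suc k. l i *s case_nat u w i) \<longleftrightarrow> (\<forall>i<Suc k. \<delta> \<le> \<nu> (l i))"
    using w unfolding orthonormal_def by (simp add: All_less_Suc2)
qed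

lemma exists_unit_vector_multiple:
  assumes "v \<noteq> 0"
  shows "\<exists>p. vec_val \<nu> (inverse (v $ p) *s v) = Fin 0 \<and> (inverse (v $ p) *s v) $ p = 1"
proof -
  obtain p where p: "vec_val \<nu> v = \<nu> (v $ p)"
    using vec_val_attained by blast
  then have "v $ p \<noteq> 0"
    using assms vec_val_eq_Infty_iff by fastforce
  then show ?thesis
    using p val_inverse by (intro exI[of _ p]) (simp add: vec_val_scale)
qed

text \<open>Gram--Schmidt for the valuation: normalise a vector at a coordinate of minimal
  valuation and recurse into the subspace where that coordinate vanishes.\<close>

lemma orthonormal_basis_exists:
  fixes V :: "('k^'n) set"
  assumes "vec.subspace V"
  shows "\<exists>k w. orthonormal w k \<and> vec.span (w ` {..<k}) = V"
  using assms
proof (induction "vec.dim V" arbitrary: V rule: less_induct)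
  case less
  show ?case
  proof (cases "V \<subseteq> {0}")
    case True
    then have "V = {0}"
      using vec.subspace_0[OF less.prems] by blast
    moreover have "orthonormal w 0" for w
      unfolding orthonormal_def by simp
    ultimately show ?thesis
      by (intro exI[of _ 0]) (simp, blast)
  next
    case False
    then obtain v where v: "v \<in> V" "v \<noteq> 0"
      by blast
    then obtain p where
      p: "vec_val \<nu> (inverse (v $ p) *s v) = Fin 0" "(inverse (v $ p) *s v) $ p = 1"
      using exists_unit_vector_multiple by blast
    define u where "u = inverse (v $ p) *s v"
    have u: "u \<in> V" "vec_val \<nu> u = Fin 0" "u $ p = 1"
      using p vec.subspace_scale[OF less.prems v(1)] unfolding u_def by simp_all
    define V' where "V' = {x \<in> V. x $ p = 0}"
    have V': "vec.subspace V'"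
      unfolding V'_def by (rule subspace_coordinate_zero[OF less.prems])
    have "vec.span V' \<subset> vec.span V"
      unfolding vec.span_eq_iff[THEN iffD2, OF V'] vec.span_eq_iff[THEN iffD2, OF less.prems]
      using u unfolding V'_def by force
    then have "vec.dim V' < vec.dim V"
      by (rule vec.dim_psubset)
    then obtain k w where w: "orthonormal w k" "vec.span (w ` {..<k}) = V'"
      using less.hyps V' by blast
    have "\<forall>i<k. w i $ p = 0"
      using vec.span_base[of _ "w ` {..<k}"] w(2) unfolding V'_def by blast
    then have "orthonormal (case_nat u w) (Suc k)"
      using orthonormal_Suc[OF w(1) u(2,3)] by blast
    moreover have img: "case_nat u w ` {..<Suc k} = insert u (w ` {..<k})"
      unfolding lessThan_Suc_eq_insert_0 by (auto simp: image_image)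
    have "vec.span (case_nat u w ` {..<Suc k}) = vec.span (insert u V')"
      unfolding img vec.span_insert w(2) vec.span_eq_iff[THEN iffD2, OF V'] ..
    then have "vec.span (case_nat u w ` {..<Suc k}) = V"
      unfolding V'_def using span_insert_coordinate_zero[OF less.prems u(1,3)] by simp
    ultimately show ?thesis
      by blast
  qed
qed

lemma orthonormal_notin_coordinate_kernel:
  assumes w: "orthonormal w k" and j: "j < k" and a: "a j = 1"
  shows "w j \<notin> coordinate_kernel w k a"
proof
  assume "w j \<in> coordinate_kernel w k a"
  then obtain l where l: "w j = (\<Sum>i<k. l i *s w i)" "(\<Sum>i<k. l i * a i) = 0"
    unfolding coordinate_kernel_def by blast
  have "(\<Sum>i<k. (if i = j then 1 else 0) *s w i) = (\<Sum>i<k. l i *s w i)"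
    using l(1) sum_lessThan_indicator_scale[OF j, of 1 w] by simp
  then have "\<forall>i<k. (if i = j then 1 else 0) = l i"
    using orthonormal_coeffs_unique[OF w, of "\<lambda>i. if i = j then 1 else 0" l] by blast
  then have "(\<Sum>i<k. l i * a i) = (\<Sum>i<k. (if i = j then 1 else 0) * a i)"
    by simp
  then show False
    using l(2) a sum_lessThan_indicator_mult[OF j, of 1 a] by simp
qed

lemma orthonormal_combination_mem:
  assumes C: "is_O_submodule \<nu> C" and w: "orthonormal w k" and \<Delta>: "upwards_closed \<Delta>"
    and coeff: "\<And>i x. i < k \<Longrightarrow> \<nu> x \<in> \<Delta> \<Longrightarrow> x *s w i \<in> C"
    and val: "vec_val \<nu> (\<Sum>i<k. l i *s w i) \<in> \<Delta>"
  shows "(\<Sum>i<k. l i *s w i) \<in> C"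
proof (rule O_submodule_sum[OF C])
  fix i assume "i \<in> {..<k}"
  then have "\<nu> (l i) \<in> \<Delta>"
    using \<Delta> val orthonormal_coeff_ge[OF w, of i l] unfolding upwards_closed_def by blast
  then show "l i *s w i \<in> C"
    using coeff \<open>i \<in> {..<k}\<close> by blast
qed

text \<open>The index \<open>j\<close> is chosen so that \<open>{x. x *s w j \<in> C}\<close> is the smallest of the
  \<open>O\<close>-modules \<open>{x. x *s w i \<in> C}\<close>.\<close>

lemma orthonormal_least_line:
  assumes C: "is_O_submodule \<nu> C" and w: "orthonormal w k" and "k \<noteq> 0"
  shows "\<exists>j \<Delta>. j < k \<and> \<Delta> \<noteq> {} \<and> upwards_closed \<Delta> \<and> (\<forall>x. x *s w j \<in> C \<longleftrightarrow> \<nu> x \<in> \<Delta>) \<and>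
           (\<forall>l. vec_val \<nu> (\<Sum>i<k. l i *s w i) \<in> \<Delta> \<longrightarrow> (\<Sum>i<k. l i *s w i) \<in> C)"
proof -
  define D where "D i = {x. x *s w i \<in> C}" for i
  have D: "is_O_submodule_K \<nu> (D i)" for i
    unfolding D_def by (rule O_submodule_K_line[OF C])
  have "D i \<subseteq> D i' \<or> D i' \<subseteq> D i" for i i'
    by (rule O_submodule_K_linear[OF D D])
  then obtain j where j: "j < k" and D_min: "\<And>i. i < k \<Longrightarrow> D j \<subseteq> D i"
    using lessThan_chain_has_least[of k D, OF \<open>k \<noteq> 0\<close>] by blast
  have mem: "x \<in> D j \<longleftrightarrow> \<nu> x \<in> \<nu> ` D j" for x
    by (rule O_submodule_K_val_image(1)[OF D])
  have "(\<Sum>i<k. l i *s w i) \<in> C" if "vec_val \<nu> (\<Sum>i<k. l i *s w i) \<in> \<nu> ` D j" for l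
  proof (rule orthonormal_combination_mem[OF C w O_submodule_K_val_image(3)[OF D] _ that])
    show "x *s w i \<in> C" if "i < k" "\<nu> x \<in> \<nu> ` D j" for i x
      using mem[of x] D_min[of i] that unfolding D_def by blast
  qed
  moreover have "x *s w j \<in> C \<longleftrightarrow> \<nu> x \<in> \<nu> ` D j" for x
    using mem[of x] unfolding D_def by simp
  ultimately show ?thesis
    using j O_submodule_K_val_image(2,3)[OF D, of j] by (intro exI[of _ j] exI[of _ "\<nu> ` D j"]) simp
qed

text \<open>With \<open>w j\<close> and \<open>\<Delta>\<close> from the previous lemma, a functional \<open>a\<close> with \<open>a j = 1\<close> mapping
  \<open>C\<close> into \<open>{x. x *s w j \<in> C}\<close> splits off from each \<open>c \<in> C\<close> the component
  \<open>(\<Sum>i<k. l i * a i) *s w j\<close>, of valuation in \<open>\<Delta>\<close>, leaving an element of its kernel.\<close>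

lemma hyperplane_splitting:
  fixes V :: "('k^'n) set"
  assumes sc: "spherically_complete \<nu>" and V: "vec.subspace V" "vec.dim V = Suc m"
    and CV: "C \<subseteq> V" and C: "is_O_submodule \<nu> C"
  shows "\<exists>H \<Delta>. vec.subspace H \<and> vec.dim H = m \<and> H \<subset> V \<and> \<Delta> \<noteq> {} \<and> upwards_closed \<Delta> \<and>
           (\<forall>v\<in>V. vec_val \<nu> v \<in> \<Delta> \<longrightarrow> v \<in> C) \<and>
           (\<forall>c\<in>C. \<exists>b\<in>V. vec_val \<nu> b \<in> \<Delta> \<and> c - b \<in> C \<inter> H)"
proof -
  obtain k w where w: "orthonormal w k" and span_w: "vec.span (w ` {..<k}) = V"
    using orthonormal_basis_exists[OF V(1)] by blast
  have repr: "\<exists>l. v = (\<Sum>i<k. l i *s w i)" if "v \<in> V" for v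
    using span_image_sum_repr[of "{..<k}" v w] span_w that by auto
  have "k \<noteq> 0"
    using span_w V(2) by (metis image_empty lessThan_0 nat.distinct(1) vec.dim_empty vec.dim_span)
  then obtain j \<Delta> where j: "j < k" and \<Delta>: "\<Delta> \<noteq> {}" "upwards_closed \<Delta>"
    and line: "\<And>x. x *s w j \<in> C \<longleftrightarrow> \<nu> x \<in> \<Delta>"
    and large: "\<And>l. vec_val \<nu> (\<Sum>i<k. l i *s w i) \<in> \<Delta> \<Longrightarrow> (\<Sum>i<k. l i *s w i) \<in> C"
    using orthonormal_least_line[OF C w] by blast
  obtain a where a: "a j = 1" "\<And>l. (\<Sum>i<k. l i *s w i) \<in> C \<Longrightarrow> (\<Sum>i<k. l i * a i) *s w j \<in> C"
    using functional_extension[OF sc C O_submodule_K_line[OF C], of "{..<k}" j w] j by auto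
  define H where "H = coordinate_kernel w k a"
  have "w j \<in> V"
    using span_w j by (auto intro: vec.span_base)
  moreover have notin: "w j \<notin> H"
    unfolding H_def by (rule orthonormal_notin_coordinate_kernel[where a = a, OF w j a(1)])
  moreover have "H \<subseteq> V"
    unfolding H_def using coordinate_kernel_subset_span span_w by blast
  moreover have "vec.dim H = m"
    using dim_span_coordinate_kernel[where a = a, OF j a(1) notin[unfolded H_def]]
    unfolding span_w V(2) H_def by simp
  moreover have "\<exists>b\<in>V. vec_val \<nu> b \<in> \<Delta> \<and> c - b \<in> C \<inter> H" if c: "c \<in> C" for c
  proof -
    obtain l where l: "c = (\<Sum>i<k. l i *s w i)"
      using repr CV c by blast
    define b where "b = (\<Sum>i<k. l i * a i) *s w j"
    have "b \<in> C" "vec_val \<nu> b \<in> \<Delta>"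
      using a(2) c line orthonormal_val_basis[OF w j] unfolding l b_def
      by (simp_all add: vec_val_scale)
    moreover have "c - b \<in> C \<inter> H"
      using O_submodule_diff[OF C c \<open>b \<in> C\<close>] sum_minus_coordinate_in_kernel[where a = a, OF j a(1)]
      unfolding l b_def H_def by blast
    ultimately show ?thesis
      using CV by blast
  qed
  moreover have "v \<in> C" if "v \<in> V" "vec_val \<nu> v \<in> \<Delta>" for v
    using repr[OF that(1)] large that(2) by blast
  moreover have "vec.subspace H"
    unfolding H_def by (rule subspace_coordinate_kernel)
  ultimately show ?thesis
    using \<Delta> by (intro exI[of _ H] exI[of _ \<Delta>]) auto
qed

definition flag_sums :: "nat \<Rightarrow> (nat \<Rightarrow> ('k^'n) set) \<Rightarrow> (nat \<Rightarrow> 'g extv set) \<Rightarrow> ('k^'n) set" where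
  "flag_sums m F \<Delta> = {(\<Sum>i\<in>{1..m}. v i) | v. \<forall>i\<in>{1..m}. v i \<in> F i \<and> vec_val \<nu> (v i) \<in> \<Delta> i}"

lemma flag_sums_0 [simp]: "flag_sums 0 F \<Delta> = {0}"
  unfolding flag_sums_def by simp

lemma flag_sums_mono:
  assumes "\<And>i. i \<in> {1..m} \<Longrightarrow> F i \<subseteq> F' i" "\<And>i. i \<in> {1..m} \<Longrightarrow> \<Delta> i \<subseteq> \<Delta>' i"
  shows "flag_sums m F \<Delta> \<subseteq> flag_sums m F' \<Delta>'"
  unfolding flag_sums_def using assms by blast

lemma flag_sums_Suc:
  assumes "x \<in> flag_sums m F \<Delta>" "b \<in> F (Suc m)" "vec_val \<nu> b \<in> \<Delta> (Suc m)"
  shows "x + b \<in> flag_sums (Suc m) F \<Delta>"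
proof -
  obtain v where v: "x = (\<Sum>i\<in>{1..m}. v i)" "\<forall>i\<in>{1..m}. v i \<in> F i \<and> vec_val \<nu> (v i) \<in> \<Delta> i"
    using assms(1) unfolding flag_sums_def by blast
  have "x + b = (\<Sum>i\<in>{1..Suc m}. (v(Suc m := b)) i)"
    using v(1) by (simp add: sum.cl_ivl_Suc)
  moreover have "\<forall>i\<in>{1..Suc m}. (v(Suc m := b)) i \<in> F i \<and> vec_val \<nu> ((v(Suc m := b)) i) \<in> \<Delta> i"
    using v(2) assms(2,3) by auto
  ultimately show ?thesis
    unfolding flag_sums_def by blast
qed

lemma single_in_flag_sums:
  assumes i: "i \<in> {1..m}" and v: "v \<in> F i" "vec_val \<nu> v \<in> \<Delta> i"
    and zero: "\<And>l. l \<in> {1..m} \<Longrightarrow> 0 \<in> F l \<and> Infty \<in> \<Delta> l"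
  shows "v \<in> flag_sums m F \<Delta>"
proof -
  define u where "u l = (if l = i then v else 0)" for l
  have "\<forall>l\<in>{1..m}. u l \<in> F l \<and> vec_val \<nu> (u l) \<in> \<Delta> l"
    using v zero unfolding u_def by simp
  moreover have "(\<Sum>l\<in>{1..m}. u l) = v"
    using i unfolding u_def by simp
  ultimately show ?thesis
    unfolding flag_sums_def by blast
qed

lemma flag_sums_subset_O_submodule:
  assumes C: "is_O_submodule \<nu> C"
    and terms: "\<And>i v. i \<in> {1..m} \<Longrightarrow> v \<in> F i \<Longrightarrow> vec_val \<nu> v \<in> \<Delta> i \<Longrightarrow> v \<in> C"
  shows "flag_sums m F \<Delta> \<subseteq> C"
proof
  fix x assume "x \<in> flag_sums m F \<Delta>"
  then obtain v where "x = (\<Sum>i\<in>{1..m}. v i)" "\<forall>i\<in>{1..m}. v i \<in> F i \<and> vec_val \<nu> (v i) \<in> \<Delta> i"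
    unfolding flag_sums_def by blast
  then show "x \<in> C"
    using O_submodule_sum[OF C, of "{1..m}" v] terms by blast
qed

definition flag_decomposition ::
    "('k^'n) set \<Rightarrow> ('k^'n) set \<Rightarrow> nat \<Rightarrow> (nat \<Rightarrow> ('k^'n) set) \<Rightarrow> (nat \<Rightarrow> 'g extv set) \<Rightarrow> bool" where
  "flag_decomposition C V m F \<Delta> \<longleftrightarrow>
     (\<forall>i\<in>{1..m}. vec.subspace (F i) \<and> vec.dim (F i) = i \<and> F i \<subseteq> V) \<and>
     (\<forall>i\<in>{1..<m}. F i \<subset> F (Suc i)) \<and>
     F m = V \<and>
     (\<forall>i\<in>{1..m}. \<Delta> i \<noteq> {} \<and> upwards_closed (\<Delta> i)) \<and>
     (\<forall>i\<in>{1..<m}. \<Delta> (Suc i) \<subseteq> \<Delta> i) \<and>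
     C = flag_sums m F \<Delta>"

lemma flag_decomposition_0:
  assumes "vec.subspace V" "vec.dim V = 0" "C \<subseteq> V" "is_O_submodule \<nu> C"
  shows "flag_decomposition C V 0 (\<lambda>_. V) (\<lambda>_. UNIV)"
proof -
  have "V = {0}"
    using assms(1,2) vec.subspace_0 by (auto simp: vec.dim_eq_0)
  then have "C = {0}"
    using assms(3) O_submodule_zero[OF assms(4)] by blast
  then show ?thesis
    unfolding flag_decomposition_def by simp
qed

lemma flag_decomposition_single_mem:
  assumes dec: "flag_decomposition C V m F \<Delta>" and "i \<in> {1..m}" "v \<in> F i" "vec_val \<nu> v \<in> \<Delta> i"
  shows "v \<in> C"
proof -
  have "0 \<in> F l \<and> Infty \<in> \<Delta> l" if "l \<in> {1..m}" for l
    using dec that vec.subspace_0 upwards_closed_Infty unfolding flag_decomposition_def by blast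
  then show ?thesis
    using single_in_flag_sums[of i m v F \<Delta>] assms unfolding flag_decomposition_def by blast
qed

lemma subset_flag_sums_Suc_extend:
  assumes CH: "C \<inter> H = flag_sums m F \<Delta>"
    and split: "\<And>c. c \<in> C \<Longrightarrow> \<exists>b\<in>V. vec_val \<nu> b \<in> \<Delta>0 \<and> c - b \<in> C \<inter> H"
  shows "C \<subseteq> flag_sums (Suc m) (\<lambda>i. if i \<le> m then F i else V) (\<lambda>i. if i \<le> m then \<Delta> i \<union> \<Delta>0 else \<Delta>0)"
    (is "_ \<subseteq> flag_sums (Suc m) ?F ?\<Delta>")
proof
  fix c assume "c \<in> C"
  then obtain b where b: "b \<in> V" "vec_val \<nu> b \<in> \<Delta>0" "c - b \<in> flag_sums m F \<Delta>"
    using split CH by blast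
  then have "c - b \<in> flag_sums m ?F ?\<Delta>"
    using flag_sums_mono[of m F ?F \<Delta> ?\<Delta>] by auto
  then have "(c - b) + b \<in> flag_sums (Suc m) ?F ?\<Delta>"
    by (rule flag_sums_Suc) (use b in simp_all)
  then show "c \<in> flag_sums (Suc m) ?F ?\<Delta>"
    by simp
qed

text \<open>Enlarging the earlier valuation sets by \<open>\<Delta>0\<close> is harmless, since every vector of \<open>V\<close>
  with valuation in \<open>\<Delta>0\<close> already lies in \<open>C\<close>.\<close>

lemma flag_sums_Suc_extend_subset:
  assumes C: "is_O_submodule \<nu> C" and dec: "flag_decomposition (C \<inter> H) H m F \<Delta>" and "H \<subseteq> V"
    and large: "\<And>v. v \<in> V \<Longrightarrow> vec_val \<nu> v \<in> \<Delta>0 \<Longrightarrow> v \<in> C"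
  shows "flag_sums (Suc m) (\<lambda>i. if i \<le> m then F i else V) (\<lambda>i. if i \<le> m then \<Delta> i \<union> \<Delta>0 else \<Delta>0) \<subseteq> C"
proof (rule flag_sums_subset_O_submodule[OF C])
  fix i v
  assume i: "i \<in> {1..Suc m}" and v: "v \<in> (if i \<le> m then F i else V)"
    "vec_val \<nu> v \<in> (if i \<le> m then \<Delta> i \<union> \<Delta>0 else \<Delta>0)"
  show "v \<in> C"
  proof (cases "i \<le> m \<and> vec_val \<nu> v \<notin> \<Delta>0")
    case True
    then have "v \<in> C \<inter> H"
      using flag_decomposition_single_mem[OF dec, of i v] v i by auto
    then show ?thesis by blast
  next
    case False
    have "F i \<subseteq> H" if "i \<le> m"
      using dec i that unfolding flag_decomposition_def by auto
    then have "v \<in> V" "vec_val \<nu> v \<in> \<Delta>0"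
      using v False \<open>H \<subseteq> V\<close> by (auto split: if_splits)
    then show ?thesis
      by (rule large)
  qed
qed

lemma flag_decomposition_Suc:
  fixes V :: "('k^'n) set"
  assumes V: "vec.subspace V" "vec.dim V = Suc m" and C: "is_O_submodule \<nu> C"
    and H: "H \<subset> V" and dec: "flag_decomposition (C \<inter> H) H m F \<Delta>"
    and \<Delta>0: "\<Delta>0 \<noteq> {}" "upwards_closed \<Delta>0"
    and large: "\<And>v. v \<in> V \<Longrightarrow> vec_val \<nu> v \<in> \<Delta>0 \<Longrightarrow> v \<in> C"
    and split: "\<And>c. c \<in> C \<Longrightarrow> \<exists>b\<in>V. vec_val \<nu> b \<in> \<Delta>0 \<and> c - b \<in> C \<inter> H"
  shows "flag_decomposition C V (Suc m)
           (\<lambda>i. if i \<le> m then F i else V) (\<lambda>i. if i \<le> m then \<Delta> i \<union> \<Delta>0 else \<Delta>0)"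
    (is "flag_decomposition C V (Suc m) ?F ?\<Delta>")
proof -
  have F: "\<And>i. i \<in> {1..m} \<Longrightarrow> vec.subspace (F i) \<and> vec.dim (F i) = i \<and> F i \<subseteq> H"
    and F_strict: "\<And>i. i \<in> {1..<m} \<Longrightarrow> F i \<subset> F (Suc i)"
    and F_top: "F m = H"
    and \<Delta>: "\<And>i. i \<in> {1..m} \<Longrightarrow> \<Delta> i \<noteq> {} \<and> upwards_closed (\<Delta> i)"
    and \<Delta>_mono: "\<And>i. i \<in> {1..<m} \<Longrightarrow> \<Delta> (Suc i) \<subseteq> \<Delta> i"
    and CH: "C \<inter> H = flag_sums m F \<Delta>"
    using dec unfolding flag_decomposition_def by auto
  have "vec.subspace (?F i) \<and> vec.dim (?F i) = i \<and> ?F i \<subseteq> V" if i: "i \<in> {1..Suc m}" for i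
    using F[of i] i H V by (cases "i \<le> m") auto
  moreover have "?F i \<subset> ?F (Suc i)" if i: "i \<in> {1..<Suc m}" for i
  proof (cases "Suc i \<le> m")
    case False
    then have "i = m"
      using i by simp
    then show ?thesis
      using F_top H by simp
  qed (use F_strict i in auto)
  moreover have "?\<Delta> i \<noteq> {} \<and> upwards_closed (?\<Delta> i)" if i: "i \<in> {1..Suc m}" for i
    using \<Delta>[of i] i \<Delta>0 upwards_closed_Un by (cases "i \<le> m") auto
  moreover have "?\<Delta> (Suc i) \<subseteq> ?\<Delta> i" if i: "i \<in> {1..<Suc m}" for i
    using \<Delta>_mono[of i] i by (cases "Suc i \<le> m") auto
  moreover have "C = flag_sums (Suc m) ?F ?\<Delta>"
    using subset_flag_sums_Suc_extend[OF CH split] flag_sums_Suc_extend_subset[OF C dec _ large] H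
    by blast
  ultimately show ?thesis
    unfolding flag_decomposition_def by (intro conjI ballI) simp_all
qed

lemma flag_decomposition_exists:
  fixes V :: "('k^'n) set"
  assumes sc: "spherically_complete \<nu>"
  shows "vec.subspace V \<Longrightarrow> vec.dim V = m \<Longrightarrow> C \<subseteq> V \<Longrightarrow> is_O_submodule \<nu> C \<Longrightarrow>
           \<exists>F \<Delta>. flag_decomposition C V m F \<Delta>"
proof (induction m arbitrary: V C)
  case 0
  then show ?case
    using flag_decomposition_0 by blast
next
  case (Suc m)
  obtain H \<Delta>0 where H: "vec.subspace H" "vec.dim H = m" "H \<subset> V"
    and \<Delta>0: "\<Delta>0 \<noteq> {}" "upwards_closed \<Delta>0"
    and large: "\<forall>v\<in>V. vec_val \<nu> v \<in> \<Delta>0 \<longrightarrow> v \<in> C"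
    and split: "\<forall>c\<in>C. \<exists>b\<in>V. vec_val \<nu> b \<in> \<Delta>0 \<and> c - b \<in> C \<inter> H"
    using hyperplane_splitting[OF sc Suc.prems] by blast
  obtain F \<Delta> where "flag_decomposition (C \<inter> H) H m F \<Delta>"
    using Suc.IH[OF H(1,2) _ O_submodule_Int_subspace[OF Suc.prems(4) H(1)]] by blast
  then show ?case
    using flag_decomposition_Suc[OF Suc.prems(1,2,4) H(3) _ \<Delta>0] large split by blast
qed

end

theorem theorem3p6:
  fixes \<nu> :: "'k::field \<Rightarrow> 'g::linordered_ab_group_add extv"
    and C :: "('k ^ 'n) set"
  assumes "valuation \<nu>"
    and "spherically_complete \<nu>"
    and "is_O_submodule \<nu> C"
  shows "\<exists>(F :: nat \<Rightarrow> ('k ^ 'n) set) (\<Delta> :: nat \<Rightarrow> 'g extv set).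
           (\<forall>i\<in>{1..CARD('n)}. vec.subspace (F i) \<and> vec.dim (F i) = i) \<and>
           (\<forall>i\<in>{1..<CARD('n)}. F i \<subset> F (Suc i)) \<and>
           F (CARD('n)) = UNIV \<and>
           (\<forall>i\<in>{1..CARD('n)}. \<Delta> i \<noteq> {} \<and> upwards_closed (\<Delta> i)) \<and>
           (\<forall>i\<in>{1..<CARD('n)}. \<Delta> (Suc i) \<subseteq> \<Delta> i) \<and>
           C = {(\<Sum>i\<in>{1..CARD('n)}. v i) | v :: nat \<Rightarrow> 'k ^ 'n.
                  \<forall>i\<in>{1..CARD('n)}. v i \<in> F i \<and> vec_val \<nu> (v i) \<in> \<Delta> i}"
proof -
  interpret valued_field \<nu>
    using assms(1) by unfold_locales
  obtain F \<Delta> where "flag_decomposition C UNIV CARD('n) F \<Delta>"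
    using flag_decomposition_exists[OF assms(2) vec.subspace_UNIV vec_dim_card subset_UNIV assms(3)]
    by blast
  then show ?thesis
    unfolding flag_decomposition_def flag_sums_def by blast
qed

end
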